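(* Let $W_2\in\{M_2,S_2\}$ and let $\phi:W_{2}\rightarrow W_{2}$ be a linear map that preserves the L-spectrum, i.e. $\sigma_{\mathcal{K}}(\phi(A))=\sigma_{\mathcal{K}}(A)$ for all $A\in W_2$. Then \[ \phi(E_{11})= \begin{bmatrix} 1-a & \mp\sqrt{a^{2}-a}\\ \pm\sqrt{a^{2}-a} & a \end{bmatrix},\quad \phi(E_{22})= \begin{bmatrix} a & \pm\sqrt{a^{2}-a}\\ \mp\sqrt{a^{2}-a} & 1-a \end{bmatrix} \] for some $a\leq 0$, and \[ \phi(E_{12}+E_{21})= \begin{bmatrix} m & r\\ -r\pm 2 & -m \end{bmatrix} \] for some $m,r\in\mathbb{R}$. In particular, if $W_{2}=S_{2}$, then $\phi(E_{11})=E_{11}$, $\phi(E_{22})=E_{22}$, and \[ \phi(E_{12}+E_{21})= \begin{bmatrix} m & r\\ r & -m \end{bmatrix} \] for some $m\in\mathbb{R}$ and $r\in\{-1,1\}$.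
   Context: $M_2$ is the space of $2\times 2$ real matrices and $S_2$ its subspace of symmetric matrices. The Lorentz cone in $\mathbb{R}^2$ is $\mathcal{K}=\{(x_1,x_2)\in\mathbb{R}^2: |x_1|\le x_2\}$. For $A\in M_2$, a scalar $\lambda\in\mathbb{R}$ is a Lorentz eigenvalue (L-eigenvalue) of $A$ if there is a nonzero $x\in\mathbb{R}^2$ with $x\in\mathcal{K}$, $(A-\lambda I)x\in\mathcal{K}$ and $x^T(A-\lambda I)x=0$; the set of all L-eigenvalues of $A$ is the L-spectrum $\sigma_{\mathcal{K}}(A)$. For $i,j\in\{1,2\}$, $E_{ij}$ denotes the $2\times 2$ matrix whose only nonzero entry is a $1$ in position $(i,j)$. The signs $\pm,\mp$ in $\phi(E_{11})$ and $\phi(E_{22})$ are chosen consistently (upper signs together or lower signs together). *)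

theory Defs
  imports "HOL-Analysis.Analysis"
begin

text \<open>2x2 real matrices are modelled as real^2^2; entries A $ i $ j with i,j :: 2 (values 1 and 2).\<close>

definition lorentz_cone :: "(real^2) set" where
  "lorentz_cone = {x. \<bar>x $ 1\<bar> \<le> x $ 2}"

definition L_eigenvalue :: "real^2^2 \<Rightarrow> real \<Rightarrow> bool" where
  "L_eigenvalue A l \<longleftrightarrow>
     (\<exists>x. x \<noteq> 0 \<and> x \<in> lorentz_cone \<and>
          (A - l *\<^sub>R mat 1) *v x \<in> lorentz_cone \<and>
          x \<bullet> ((A - l *\<^sub>R mat 1) *v x) = 0)"

definition L_spectrum :: "real^2^2 \<Rightarrow> real set" where
  "L_spectrum A = {l. L_eigenvalue A l}"

definition Eij :: "2 \<Rightarrow> 2 \<Rightarrow> real^2^2" where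
  "Eij i j = (\<chi> k l. if k = i \<and> l = j then 1 else 0)"

definition mat2 :: "real \<Rightarrow> real \<Rightarrow> real \<Rightarrow> real \<Rightarrow> real^2^2" where
  "mat2 a b c d = (\<chi> i j. if i = 1 then (if j = 1 then a else b) else (if j = 1 then c else d))"

definition sym2 :: "(real^2^2) set" where
  "sym2 = {A. transpose A = A}"

end

theory Submission
  imports Defs
begin

(* The map R = [[1,1],[-1,1]] carries the Lorentz cone of R^2 onto the nonnegative quadrant and
   satisfies R^T R = 2 I.  Hence the L-eigenvalues of A are exactly the Pareto (complementarity)
   eigenvalues of R A R^-1, and conjugation by R preserves symmetry.  So phi induces a linear map on
   symmetric 2x2 matrices preserving Pareto spectra, determined by the images K, L, M of diag(1,0),
   diag(0,1) and the swap matrix J.  Comparing Pareto spectra of a few test matrices (diagonal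
   matrices, +-J, [[t,s],[s,t]] with s < 0, [[0,2],[2,3]]) forces K + L = I,
   M = [[0,mu],[1/mu,0]] with mu > 0, and diag(K - L) = +-(1,-1).  Conjugating back gives the
   stated forms with a = 1/2 - (mu + 1/mu)/4 <= 0.  When W = S_2, M is symmetric, so mu = 1. *)

lemma mat2_nth [simp]:
  "mat2 a b c d $ 1 $ 1 = a" "mat2 a b c d $ 1 $ 2 = b"
  "mat2 a b c d $ 2 $ 1 = c" "mat2 a b c d $ 2 $ 2 = d"
  by (simp_all add: mat2_def)

lemma matrix2_eq_iff:
  "(A::'a^2^2) = B \<longleftrightarrow> A$1$1 = B$1$1 \<and> A$1$2 = B$1$2 \<and> A$2$1 = B$2$1 \<and> A$2$2 = B$2$2"
  by (auto simp: vec_eq_iff forall_2)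

lemma vec2_eq_0_iff: "(x::real^2) = 0 \<longleftrightarrow> x$1 = 0 \<and> x$2 = 0"
  by (auto simp: vec_eq_iff forall_2)

lemma inner_vec2: "(x::real^2) \<bullet> y = x$1 * y$1 + x$2 * y$2"
  by (simp add: inner_vec_def sum_2)

lemma shifted_matrix_vector_mult_2:
  fixes A :: "real^2^2"
  shows "((A - l *\<^sub>R mat 1) *v x) $ 1 = (A$1$1 - l) * x$1 + A$1$2 * x$2"
    and "((A - l *\<^sub>R mat 1) *v x) $ 2 = A$2$1 * x$1 + (A$2$2 - l) * x$2"
  by (simp_all add: matrix_vector_mult_def sum_2 mat_def algebra_simps)

lemma sym2_iff: "A \<in> sym2 \<longleftrightarrow> A$1$2 = A$2$1"
  by (auto simp: sym2_def matrix2_eq_iff transpose_def)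

lemma sym2_lincomb: "A \<in> sym2 \<Longrightarrow> B \<in> sym2 \<Longrightarrow> x *\<^sub>R A + y *\<^sub>R B \<in> sym2"
  by (simp add: sym2_iff)

section \<open>Pareto eigenvalues of 2x2 matrices\<close>

definition pareto_eigenvalue :: "real^'n^'n \<Rightarrow> real \<Rightarrow> bool" where
  "pareto_eigenvalue A l \<longleftrightarrow>
     (\<exists>x. x \<noteq> 0 \<and> (\<forall>i. 0 \<le> x $ i) \<and> (\<forall>i. 0 \<le> ((A - l *\<^sub>R mat 1) *v x) $ i) \<and>
          x \<bullet> ((A - l *\<^sub>R mat 1) *v x) = 0)"

lemma pareto_eigenvalue_2_coordinates:
  fixes A :: "real^2^2"
  shows "pareto_eigenvalue A l \<longleftrightarrow> (\<exists>y1 y2. 0 \<le> y1 \<and> 0 \<le> y2 \<and> (y1 \<noteq> 0 \<or> y2 \<noteq> 0) \<and>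
     0 \<le> (A$1$1 - l) * y1 + A$1$2 * y2 \<and> 0 \<le> A$2$1 * y1 + (A$2$2 - l) * y2 \<and>
     y1 * ((A$1$1 - l) * y1 + A$1$2 * y2) + y2 * (A$2$1 * y1 + (A$2$2 - l) * y2) = 0)"
    (is "_ \<longleftrightarrow> (\<exists>y1 y2. ?P y1 y2)")
proof
  assume "pareto_eigenvalue A l"
  then obtain x :: "real^2" where "x \<noteq> 0" "\<forall>i. 0 \<le> x $ i" "\<forall>i. 0 \<le> ((A - l *\<^sub>R mat 1) *v x) $ i"
    "x \<bullet> ((A - l *\<^sub>R mat 1) *v x) = 0"
    unfolding pareto_eigenvalue_def by blast
  then have "?P (x$1) (x$2)"
    by (simp add: shifted_matrix_vector_mult_2 inner_vec2 forall_2 vec2_eq_0_iff)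
  then show "\<exists>y1 y2. ?P y1 y2" by blast
next
  assume "\<exists>y1 y2. ?P y1 y2"
  then obtain y1 y2 where "?P y1 y2" by blast
  then show "pareto_eigenvalue A l"
    unfolding pareto_eigenvalue_def
    by (intro exI[of _ "vector [y1, y2]"])
       (simp add: shifted_matrix_vector_mult_2 vec2_eq_0_iff inner_vec2 forall_2)
qed

lemma pareto_eigenvalue_2_iff:
  fixes A :: "real^2^2"
  shows "pareto_eigenvalue A l \<longleftrightarrow> (l = A$1$1 \<and> 0 \<le> A$2$1) \<or> (l = A$2$2 \<and> 0 \<le> A$1$2) \<or>
     (\<exists>y1>0. \<exists>y2>0. (A$1$1 - l) * y1 + A$1$2 * y2 = 0 \<and> A$2$1 * y1 + (A$2$2 - l) * y2 = 0)"
    (is "_ \<longleftrightarrow> ?first \<or> ?second \<or> ?both")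
proof
  assume "pareto_eigenvalue A l"
  then obtain y1 y2 where y: "0 \<le> y1" "0 \<le> y2" "y1 \<noteq> 0 \<or> y2 \<noteq> 0"
    and w: "0 \<le> (A$1$1 - l) * y1 + A$1$2 * y2" "0 \<le> A$2$1 * y1 + (A$2$2 - l) * y2"
    and complementary:
      "y1 * ((A$1$1 - l) * y1 + A$1$2 * y2) + y2 * (A$2$1 * y1 + (A$2$2 - l) * y2) = 0"
    unfolding pareto_eigenvalue_2_coordinates by blast
  have first_zero: "y1 * ((A$1$1 - l) * y1 + A$1$2 * y2) = 0"
    and second_zero: "y2 * (A$2$1 * y1 + (A$2$2 - l) * y2) = 0"
    using complementary mult_nonneg_nonneg[OF y(1) w(1)] mult_nonneg_nonneg[OF y(2) w(2)]
    by linarith+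
  consider "y1 = 0" "0 < y2" | "0 < y1" "y2 = 0" | "0 < y1" "0 < y2"
    using y by force
  then show "?first \<or> ?second \<or> ?both"
  proof cases
    case 1
    then show ?thesis using second_zero w(1) by (simp add: zero_le_mult_iff)
  next
    case 2
    then show ?thesis using first_zero w(2) by (simp add: zero_le_mult_iff)
  next
    case 3
    then show ?thesis using first_zero second_zero by auto
  qed
next
  have witness: "pareto_eigenvalue A l"
    if "0 \<le> y1" "0 \<le> y2" "y1 \<noteq> 0 \<or> y2 \<noteq> 0" "0 \<le> (A$1$1 - l) * y1 + A$1$2 * y2"
      "0 \<le> A$2$1 * y1 + (A$2$2 - l) * y2"
      "y1 * ((A$1$1 - l) * y1 + A$1$2 * y2) + y2 * (A$2$1 * y1 + (A$2$2 - l) * y2) = 0" for y1 y2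
    unfolding pareto_eigenvalue_2_coordinates using that by blast
  assume "?first \<or> ?second \<or> ?both"
  then show "pareto_eigenvalue A l"
  proof (elim disjE exE conjE)
    fix y1 y2 :: real
    assume "0 < y1" "0 < y2" "(A$1$1 - l) * y1 + A$1$2 * y2 = 0" "A$2$1 * y1 + (A$2$2 - l) * y2 = 0"
    then show ?thesis by (intro witness[of y1 y2]) simp_all
  qed (use witness[of 1 0] witness[of 0 1] in simp_all)
qed

lemma pareto_eigenvalue_first_diagonal:
  fixes A :: "real^2^2"
  shows "0 \<le> A$2$1 \<Longrightarrow> pareto_eigenvalue A (A$1$1)"
  by (simp add: pareto_eigenvalue_2_iff)

lemma pareto_eigenvalue_second_diagonal:
  fixes A :: "real^2^2"
  shows "0 \<le> A$1$2 \<Longrightarrow> pareto_eigenvalue A (A$2$2)"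
  by (simp add: pareto_eigenvalue_2_iff)

lemma pareto_eigenvalue_positive_eigenvector:
  fixes A :: "real^2^2"
  assumes "0 < y1" "0 < y2" "(A$1$1 - l) * y1 + A$1$2 * y2 = 0" "A$2$1 * y1 + (A$2$2 - l) * y2 = 0"
  shows "pareto_eigenvalue A l"
  using assms by (auto simp: pareto_eigenvalue_2_iff)

lemma pareto_eigenvalue_off_diagonal_det:
  fixes A :: "real^2^2"
  assumes "pareto_eigenvalue A l" "l \<noteq> A$1$1" "l \<noteq> A$2$2"
  shows "(A$1$1 - l) * (A$2$2 - l) = A$1$2 * A$2$1"
proof -
  obtain y1 y2 where y: "0 < y1" "0 < y2"
    and eq: "(A$1$1 - l) * y1 = - (A$1$2 * y2)" "(A$2$2 - l) * y2 = - (A$2$1 * y1)"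
    using assms by (auto simp: pareto_eigenvalue_2_iff algebra_simps)
  have "((A$1$1 - l) * (A$2$2 - l)) * (y1 * y2) = ((A$1$1 - l) * y1) * ((A$2$2 - l) * y2)"
    by (simp add: algebra_simps)
  also have "\<dots> = (A$1$2 * A$2$1) * (y1 * y2)"
    unfolding eq by (simp add: algebra_simps)
  finally show ?thesis using y by simp
qed

lemma pareto_eigenvalue_off_diagonal_sum:
  fixes A :: "real^2^2"
  assumes "pareto_eigenvalue A l1" "pareto_eigenvalue A l2" "l1 \<noteq> l2"
    and "l1 \<notin> {A$1$1, A$2$2}" "l2 \<notin> {A$1$1, A$2$2}"
  shows "l1 + l2 = A$1$1 + A$2$2"
proof -
  have "(A$1$1 - l1) * (A$2$2 - l1) = (A$1$1 - l2) * (A$2$2 - l2)"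
    using assms pareto_eigenvalue_off_diagonal_det by simp
  then have "(l1 - l2) * (l1 + l2 - A$1$1 - A$2$2) = 0"
    by (simp add: algebra_simps)
  then show ?thesis using assms(3) by simp
qed

lemma pareto_eigenvalue_diagonal: "pareto_eigenvalue (mat2 x 0 0 y) l \<Longrightarrow> l = x \<or> l = y"
  by (auto simp: pareto_eigenvalue_2_iff)

lemma pareto_eigenvalue_symmetric_zero_diagonal:
  "pareto_eigenvalue (mat2 0 s s 0) l \<Longrightarrow> l = s \<or> (l = 0 \<and> 0 \<le> s)"
proof (cases "l = 0")
  case False
  assume "pareto_eigenvalue (mat2 0 s s 0) l"
  then obtain y1 y2 where y: "0 < y1" "0 < y2" and eq: "l * y1 = s * y2" "l * y2 = s * y1"
    using False by (auto simp: pareto_eigenvalue_2_iff algebra_simps)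
  have "l * l * (y1 * y2) = s * s * (y1 * y2)"
    using eq by (metis mult.commute mult.left_commute)
  then have "l = s \<or> l = - s"
    using y by (simp add: square_eq_iff)
  moreover have "0 < l * s"
    using eq y False
    by (smt (verit) mult_pos_pos mult_neg_pos mult_pos_neg mult_nonneg_nonneg zero_less_mult_iff)
  ultimately show ?thesis by auto
qed (auto simp: pareto_eigenvalue_2_iff)

lemma pareto_eigenvalue_equal_diagonal_iff:
  fixes A :: "real^2^2"
  assumes "A$1$1 = l" "A$2$2 = l"
  shows "pareto_eigenvalue A l \<longleftrightarrow> 0 \<le> A$1$2 \<or> 0 \<le> A$2$1"
  using assms by (auto simp: pareto_eigenvalue_2_iff)

lemma pareto_eigenvalue_equal_diagonal_sign:
  fixes A :: "real^2^2"
  assumes "A$1$1 = d" "A$2$2 = d" "pareto_eigenvalue A l" "l \<noteq> d"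
  shows "0 < (l - d) * A$1$2" "0 < (l - d) * A$2$1"
proof -
  obtain y1 y2 where y: "0 < y1" "0 < y2"
    and eq: "A$1$2 * y2 = (l - d) * y1" "A$2$1 * y1 = (l - d) * y2"
    using assms by (auto simp: pareto_eigenvalue_2_iff algebra_simps)
  have "(l - d) * A$1$2 * y2 = (l - d)\<^sup>2 * y1" "(l - d) * A$2$1 * y1 = (l - d)\<^sup>2 * y2"
    by (simp_all only: mult.assoc eq) (simp_all add: power2_eq_square)
  then show "0 < (l - d) * A$1$2" "0 < (l - d) * A$2$1"
    using y assms(4) by (metis zero_less_mult_pos2 mult_pos_pos zero_less_power2 right_minus_eq)+
qed

lemma pareto_eigenvalue_zero_diagonal_neg:
  fixes N :: "real^2^2"
  assumes "N$1$1 = 0" "N$2$2 = 0" "pareto_eigenvalue N 1"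
  shows "\<not> pareto_eigenvalue (- N) 0"
proof -
  have "0 < N$1$2" "0 < N$2$1"
    using pareto_eigenvalue_equal_diagonal_sign[OF assms] by simp_all
  then show ?thesis
    using pareto_eigenvalue_equal_diagonal_iff[of "- N" 0] assms by simp
qed

section \<open>Rotating the Lorentz cone onto the nonnegative quadrant\<close>

definition cone_rotation :: "real^2^2" where
  "cone_rotation = mat2 1 1 (-1) 1"

definition quadrant_form :: "real^2^2 \<Rightarrow> real^2^2" where
  "quadrant_form A = cone_rotation ** A ** ((1/2) *\<^sub>R transpose cone_rotation)"

definition lorentz_form :: "real^2^2 \<Rightarrow> real^2^2" where
  "lorentz_form B = ((1/2) *\<^sub>R transpose cone_rotation) ** B ** cone_rotation"

lemma cone_rotation_inverse:
  "cone_rotation ** ((1/2) *\<^sub>R transpose cone_rotation) = mat 1"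
  "((1/2) *\<^sub>R transpose cone_rotation) ** cone_rotation = mat 1"
  by (simp_all add: matrix2_eq_iff cone_rotation_def matrix_matrix_mult_def sum_2 transpose_def
      mat_def)

lemma quadrant_form_lorentz_form [simp]: "quadrant_form (lorentz_form B) = B"
  by (simp add: quadrant_form_def lorentz_form_def matrix_mul_assoc cone_rotation_inverse)
     (simp add: matrix_mul_assoc[symmetric] cone_rotation_inverse)

lemma lorentz_form_quadrant_form [simp]: "lorentz_form (quadrant_form A) = A"
  by (simp add: quadrant_form_def lorentz_form_def matrix_mul_assoc cone_rotation_inverse)
     (simp add: matrix_mul_assoc[symmetric] cone_rotation_inverse)

lemma linear_quadrant_form: "linear quadrant_form"
  by (rule linearI)
     (simp_all add: matrix2_eq_iff quadrant_form_def cone_rotation_def matrix_matrix_mult_def sum_2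
       transpose_def algebra_simps)

lemma quadrant_form_shift: "quadrant_form (A - l *\<^sub>R mat 1) = quadrant_form A - l *\<^sub>R mat 1"
  by (simp add: matrix2_eq_iff quadrant_form_def cone_rotation_def matrix_matrix_mult_def sum_2
      transpose_def mat_def algebra_simps)

lemma quadrant_form_sym2: "A \<in> sym2 \<Longrightarrow> quadrant_form A \<in> sym2"
  by (simp add: sym2_iff quadrant_form_def cone_rotation_def matrix_matrix_mult_def sum_2
      transpose_def field_simps)

lemma lorentz_form_mat2:
  "lorentz_form (mat2 a b c d) = mat2 ((a-b-c+d)/2) ((a+b-c-d)/2) ((a-b+c-d)/2) ((a+b+c+d)/2)"
  by (simp add: matrix2_eq_iff lorentz_form_def cone_rotation_def matrix_matrix_mult_def sum_2
      transpose_def field_simps)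

lemma lorentz_form_sym2: "lorentz_form (mat2 x z z y) \<in> sym2"
  by (simp add: sym2_iff lorentz_form_mat2)

lemma lorentz_form_Eij:
  "Eij 1 1 = lorentz_form (mat2 (1/2) (- 1/2) (- 1/2) (1/2))"
  "Eij 2 2 = lorentz_form (mat2 (1/2) (1/2) (1/2) (1/2))"
  "Eij 1 2 + Eij 2 1 = lorentz_form (mat2 1 0 0 (- 1))"
  by (simp_all add: lorentz_form_mat2 matrix2_eq_iff Eij_def)

lemma cone_rotation_eq_0_iff: "cone_rotation *v x = 0 \<longleftrightarrow> x = 0"
  by (metis matrix_vector_mult_0_right cone_rotation_inverse(2) matrix_vector_mul_assoc
      matrix_vector_mul_lid)

lemma cone_rotation_mult_inverse: "y = cone_rotation *v ((1/2) *\<^sub>R transpose cone_rotation *v y)"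
  by (simp add: matrix_vector_mul_assoc cone_rotation_inverse)

lemma lorentz_cone_iff_rotated_nonneg:
  "x \<in> lorentz_cone \<longleftrightarrow> (\<forall>i. 0 \<le> (cone_rotation *v x) $ i)"
  by (auto simp: lorentz_cone_def cone_rotation_def forall_2 matrix_vector_mult_def sum_2)

lemma inner_cone_rotation: "(cone_rotation *v x) \<bullet> (cone_rotation *v y) = 2 * (x \<bullet> y)"
  by (simp add: inner_vec2 cone_rotation_def matrix_vector_mult_def sum_2 algebra_simps)

lemma quadrant_form_mult_cone_rotation:
  "quadrant_form B *v (cone_rotation *v x) = cone_rotation *v (B *v x)"
  by (simp add: quadrant_form_def matrix_vector_mul_assoc matrix_mul_assoc[symmetric]
      cone_rotation_inverse)

lemma L_eigenvalue_iff_pareto_eigenvalue: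
  "L_eigenvalue A l \<longleftrightarrow> pareto_eigenvalue (quadrant_form A) l"
proof -
  define pareto_vector where "pareto_vector y \<longleftrightarrow> y \<noteq> 0 \<and> (\<forall>i. 0 \<le> y $ i) \<and>
    (\<forall>i. 0 \<le> ((quadrant_form A - l *\<^sub>R mat 1) *v y) $ i) \<and>
    y \<bullet> ((quadrant_form A - l *\<^sub>R mat 1) *v y) = 0"
    for y :: "real^2"
  have "L_eigenvalue A l \<longleftrightarrow> (\<exists>x. pareto_vector (cone_rotation *v x))"
    by (simp add: L_eigenvalue_def pareto_vector_def lorentz_cone_iff_rotated_nonneg
        cone_rotation_eq_0_iff quadrant_form_shift[symmetric] quadrant_form_mult_cone_rotation
        inner_cone_rotation)
  also have "\<dots> \<longleftrightarrow> (\<exists>y. pareto_vector y)"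
    by (metis cone_rotation_mult_inverse)
  finally show ?thesis
    by (simp add: pareto_eigenvalue_def pareto_vector_def)
qed

section \<open>Pareto spectrum preservers on symmetric matrices\<close>

locale pareto_spectrum_preserver_sym2 =
  fixes K L M :: "real^2^2"
  assumes preserves:
    "\<And>x y z l. pareto_eigenvalue (x *\<^sub>R K + y *\<^sub>R L + z *\<^sub>R M) l \<longleftrightarrow> pareto_eigenvalue (mat2 x z z y) l"
begin

lemma lincomb_uminus: "(- x) *\<^sub>R K + (- y) *\<^sub>R L + (- z) *\<^sub>R M = - (x *\<^sub>R K + y *\<^sub>R L + z *\<^sub>R M)"
  by (simp add: algebra_simps)

lemma first_diagonal_of_image:
  "pareto_eigenvalue (mat2 x z z y) ((x *\<^sub>R K + y *\<^sub>R L + z *\<^sub>R M)$1$1) \<or>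
   pareto_eigenvalue (mat2 (- x) (- z) (- z) (- y)) (- (x *\<^sub>R K + y *\<^sub>R L + z *\<^sub>R M)$1$1)"
proof (cases "0 \<le> (x *\<^sub>R K + y *\<^sub>R L + z *\<^sub>R M)$2$1")
  case True
  then show ?thesis using pareto_eigenvalue_first_diagonal preserves by blast
next
  case False
  then have "pareto_eigenvalue ((- x) *\<^sub>R K + (- y) *\<^sub>R L + (- z) *\<^sub>R M)
      (((- x) *\<^sub>R K + (- y) *\<^sub>R L + (- z) *\<^sub>R M)$1$1)"
    unfolding lincomb_uminus by (intro pareto_eigenvalue_first_diagonal) simp
  then show ?thesis unfolding preserves by (simp add: lincomb_uminus)
qed

lemma second_diagonal_of_image:
  "pareto_eigenvalue (mat2 x z z y) ((x *\<^sub>R K + y *\<^sub>R L + z *\<^sub>R M)$2$2) \<or>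
   pareto_eigenvalue (mat2 (- x) (- z) (- z) (- y)) (- (x *\<^sub>R K + y *\<^sub>R L + z *\<^sub>R M)$2$2)"
proof (cases "0 \<le> (x *\<^sub>R K + y *\<^sub>R L + z *\<^sub>R M)$1$2")
  case True
  then show ?thesis using pareto_eigenvalue_second_diagonal preserves by blast
next
  case False
  then have "pareto_eigenvalue ((- x) *\<^sub>R K + (- y) *\<^sub>R L + (- z) *\<^sub>R M)
      (((- x) *\<^sub>R K + (- y) *\<^sub>R L + (- z) *\<^sub>R M)$2$2)"
    unfolding lincomb_uminus by (intro pareto_eigenvalue_second_diagonal) simp
  then show ?thesis unfolding preserves by (simp add: lincomb_uminus)
qed

lemma diagonal_of_diagonal_image:
  "(x *\<^sub>R K + y *\<^sub>R L)$1$1 \<in> {x, y}" "(x *\<^sub>R K + y *\<^sub>R L)$2$2 \<in> {x, y}"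
  using first_diagonal_of_image[where x=x and y=y and z=0]
    second_diagonal_of_image[where x=x and y=y and z=0]
    pareto_eigenvalue_diagonal
  by fastforce+

lemma diagonal_images_01:
  "K$1$1 \<in> {0, 1}" "L$1$1 = 1 - K$1$1" "K$2$2 \<in> {0, 1}" "L$2$2 = 1 - K$2$2"
  using diagonal_of_diagonal_image[of 1 0] diagonal_of_diagonal_image[of 0 1]
    diagonal_of_diagonal_image[of 1 1]
  by auto

lemma diagonal_images:
  "(K$1$1 = 1 \<and> K$2$2 = 0 \<and> L$1$1 = 0 \<and> L$2$2 = 1) \<or>
   (K$1$1 = 0 \<and> K$2$2 = 1 \<and> L$1$1 = 1 \<and> L$2$2 = 0)"
proof -
  have "pareto_eigenvalue K 1" "pareto_eigenvalue (- K) 0"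
    using preserves[of 1 0 0] preserves[of "- 1" 0 0]
      pareto_eigenvalue_first_diagonal[of "mat2 1 0 0 0"]
      pareto_eigenvalue_second_diagonal[of "mat2 (- 1) 0 0 0"] by simp_all
  then have "\<not> (K$1$1 = 0 \<and> K$2$2 = 0)"
    using pareto_eigenvalue_zero_diagonal_neg by blast
  moreover have "pareto_eigenvalue L 1" "pareto_eigenvalue (- L) 0"
    using preserves[of 0 1 0] preserves[of 0 "- 1" 0]
      pareto_eigenvalue_second_diagonal[of "mat2 0 0 0 1"]
      pareto_eigenvalue_first_diagonal[of "mat2 0 0 0 (- 1)"] by simp_all
  then have "\<not> (L$1$1 = 0 \<and> L$2$2 = 0)"
    using pareto_eigenvalue_zero_diagonal_neg by blast
  ultimately show ?thesis
    using diagonal_images_01 by auto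
qed

lemma offdiag_image_diagonal_01: "M$1$1 \<in> {0, 1}" "M$2$2 \<in> {0, 1}"
  using first_diagonal_of_image[where x=0 and y=0 and z=1]
    second_diagonal_of_image[where x=0 and y=0 and z=1]
    pareto_eigenvalue_symmetric_zero_diagonal[of 1]
    pareto_eigenvalue_symmetric_zero_diagonal[of "- 1"]
  by fastforce+

lemma offdiag_image_diagonal_not_11: "\<not> (M$1$1 = 1 \<and> M$2$2 = 1)"
proof
  assume diag: "M$1$1 = 1 \<and> M$2$2 = 1"
  have "pareto_eigenvalue M 0"
    using preserves[of 0 0 1 0] pareto_eigenvalue_first_diagonal[of "mat2 0 1 1 0"] by simp
  then have neg: "M$1$2 < 0" and det: "M$1$2 * M$2$1 = 1"
    using diag pareto_eigenvalue_equal_diagonal_sign[of M 1 0]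
      pareto_eigenvalue_off_diagonal_det[of M 0]
    by simp_all
  have "pareto_eigenvalue (- M) 0"
    using diag neg det
    by (intro pareto_eigenvalue_positive_eigenvector[of "- M$1$2" 1]) (simp_all add: algebra_simps)
  then have "pareto_eigenvalue (mat2 0 (- 1) (- 1) 0) 0"
    using preserves[of 0 0 "- 1" 0] by simp
  then show False
    using pareto_eigenvalue_symmetric_zero_diagonal[of "- 1" 0] by simp
qed

(* [[x,2],[2,y]] with {x,y} = {0,3} has Pareto eigenvalues 0 and 4.  If the diagonal of M were
   (1,0) or (0,1), one of these test matrices would be sent to a matrix with diagonal {2,3},
   for which 0 and 4 would be two non-diagonal eigenvalues not summing to the trace. *)
lemma offdiag_image_trace_neq_1: "M$1$1 + M$2$2 \<noteq> 1"
proof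
  assume trace: "M$1$1 + M$2$2 = 1"
  have eigenvalues_0_4: "pareto_eigenvalue (mat2 x 2 2 y) 0" "pareto_eigenvalue (mat2 x 2 2 y) 4"
    if "(x = 0 \<and> y = 3) \<or> (x = 3 \<and> y = 0)" for x y :: real
    using that pareto_eigenvalue_first_diagonal[of "mat2 0 2 2 3"]
      pareto_eigenvalue_second_diagonal[of "mat2 3 2 2 0"]
      pareto_eigenvalue_positive_eigenvector[of 1 2 "mat2 0 2 2 3" 4]
      pareto_eigenvalue_positive_eigenvector[of 2 1 "mat2 3 2 2 0" 4] by auto
  have diagonal_23: False
    if "(x = 0 \<and> y = 3) \<or> (x = 3 \<and> y = 0)" "(x *\<^sub>R K + y *\<^sub>R L + 2 *\<^sub>R M)$1$1 \<in> {2, 3}"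
      "(x *\<^sub>R K + y *\<^sub>R L + 2 *\<^sub>R M)$1$1 + (x *\<^sub>R K + y *\<^sub>R L + 2 *\<^sub>R M)$2$2 = 5" for x y :: real
    using pareto_eigenvalue_off_diagonal_sum[of "x *\<^sub>R K + y *\<^sub>R L + 2 *\<^sub>R M" 0 4]
      eigenvalues_0_4[OF that(1)] that(2,3) unfolding preserves by auto
  show False
    using diagonal_images offdiag_image_diagonal_01 trace
      diagonal_23[of 0 3] diagonal_23[of 3 0] by auto
qed

lemma offdiag_image_zero_diagonal: "M$1$1 = 0" "M$2$2 = 0"
  using offdiag_image_diagonal_01 offdiag_image_diagonal_not_11 offdiag_image_trace_neq_1 by auto

lemma off_diagonal_negative:
  assumes "s < 0"
  shows "(t *\<^sub>R (K + L) + s *\<^sub>R M)$1$2 < 0" "(t *\<^sub>R (K + L) + s *\<^sub>R M)$2$1 < 0"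
proof -
  have "\<not> pareto_eigenvalue (mat2 t s s t) t"
    using assms pareto_eigenvalue_equal_diagonal_iff[of "mat2 t s s t" t] by simp
  then have "\<not> pareto_eigenvalue (t *\<^sub>R (K + L) + s *\<^sub>R M) t"
    unfolding scaleR_add_right preserves .
  moreover have "(t *\<^sub>R (K + L) + s *\<^sub>R M)$1$1 = t" "(t *\<^sub>R (K + L) + s *\<^sub>R M)$2$2 = t"
    using diagonal_images_01 offdiag_image_zero_diagonal by auto
  ultimately show "(t *\<^sub>R (K + L) + s *\<^sub>R M)$1$2 < 0" "(t *\<^sub>R (K + L) + s *\<^sub>R M)$2$1 < 0"
    using pareto_eigenvalue_equal_diagonal_iff by fastforce+
qed

lemma off_diagonal_images:
  "K$1$2 + L$1$2 = 0" "K$2$1 + L$2$1 = 0" "0 < M$1$2" "0 < M$2$1"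
proof -
  show "0 < M$1$2" "0 < M$2$1"
    using off_diagonal_negative[of "- 1" 0] by simp_all
  show "K$1$2 + L$1$2 = 0"
  proof (rule ccontr)
    assume "K$1$2 + L$1$2 \<noteq> 0"
    then show False
      using off_diagonal_negative(1)[of "- 1" "M$1$2 / (K$1$2 + L$1$2)"] by simp
  qed
  show "K$2$1 + L$2$1 = 0"
  proof (rule ccontr)
    assume "K$2$1 + L$2$1 \<noteq> 0"
    then show False
      using off_diagonal_negative(2)[of "- 1" "M$2$1 / (K$2$1 + L$2$1)"] by simp
  qed
qed

lemma offdiag_image_det: "M$1$2 * M$2$1 = 1"
proof -
  have "pareto_eigenvalue (mat2 0 1 1 0) 1"
    by (rule pareto_eigenvalue_positive_eigenvector[of 1 1]) simp_all
  then have "pareto_eigenvalue M 1"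
    using preserves[of 0 0 1 1] by simp
  then show ?thesis
    using pareto_eigenvalue_off_diagonal_det[of M 1] offdiag_image_zero_diagonal by simp
qed

theorem sym2_images:
  "K + L = mat 1"
  "\<exists>\<mu>>0. M = mat2 0 \<mu> (inverse \<mu>) 0"
  "\<exists>t\<in>{-1, 1}. (K - L)$1$1 = t \<and> (K - L)$2$2 = - t"
proof -
  show "K + L = mat 1"
    using diagonal_images_01 off_diagonal_images by (simp add: matrix2_eq_iff mat_def)
  show "\<exists>\<mu>>0. M = mat2 0 \<mu> (inverse \<mu>) 0"
    using off_diagonal_images offdiag_image_zero_diagonal offdiag_image_det
    by (intro exI[of _ "M$1$2"]) (simp add: matrix2_eq_iff field_simps)
  show "\<exists>t\<in>{-1, 1}. (K - L)$1$1 = t \<and> (K - L)$2$2 = - t"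
    using diagonal_images by auto
qed

end

section \<open>L-spectrum preservers\<close>

lemma L_spectrum_preserver_quadrant_conjugate:
  fixes \<phi> :: "real^2^2 \<Rightarrow> real^2^2"
  assumes sym2_W: "sym2 \<subseteq> W"
    and lin: "\<forall>A\<in>W. \<forall>B\<in>W. \<forall>c d. \<phi> (c *\<^sub>R A + d *\<^sub>R B) = c *\<^sub>R \<phi> A + d *\<^sub>R \<phi> B"
    and pres: "\<forall>A\<in>W. L_spectrum (\<phi> A) = L_spectrum A"
  defines "K \<equiv> quadrant_form (\<phi> (lorentz_form (mat2 1 0 0 0)))"
    and "L \<equiv> quadrant_form (\<phi> (lorentz_form (mat2 0 0 0 1)))"
    and "M \<equiv> quadrant_form (\<phi> (lorentz_form (mat2 0 1 1 0)))"
  shows "quadrant_form (\<phi> (lorentz_form (mat2 x z z y))) = x *\<^sub>R K + y *\<^sub>R L + z *\<^sub>R M"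
    and "pareto_spectrum_preserver_sym2 K L M"
proof -
  have lin_sym2: "\<phi> (c *\<^sub>R A + d *\<^sub>R B) = c *\<^sub>R \<phi> A + d *\<^sub>R \<phi> B" if "A \<in> sym2" "B \<in> sym2" for A B c d
    using lin sym2_W that by blast
  have lin3_sym2: "\<phi> (x *\<^sub>R A + y *\<^sub>R B + z *\<^sub>R C) = x *\<^sub>R \<phi> A + y *\<^sub>R \<phi> B + z *\<^sub>R \<phi> C"
    if "A \<in> sym2" "B \<in> sym2" "C \<in> sym2" for A B C x y z
    using lin_sym2[of "x *\<^sub>R A + y *\<^sub>R B" C 1 z] lin_sym2[of A B x y] sym2_lincomb that by simp
  show decomp: "quadrant_form (\<phi> (lorentz_form (mat2 x z z y))) = x *\<^sub>R K + y *\<^sub>R L + z *\<^sub>R M"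
    for x y z
  proof -
    have "lorentz_form (mat2 x z z y) = x *\<^sub>R lorentz_form (mat2 1 0 0 0)
        + y *\<^sub>R lorentz_form (mat2 0 0 0 1) + z *\<^sub>R lorentz_form (mat2 0 1 1 0)"
      by (simp add: lorentz_form_mat2 matrix2_eq_iff field_simps)
    then show ?thesis
      unfolding K_def L_def M_def
      by (simp add: lin3_sym2 lorentz_form_sym2 linear_add[OF linear_quadrant_form]
          linear_scale[OF linear_quadrant_form])
  qed
  show "pareto_spectrum_preserver_sym2 K L M"
  proof
    fix x y z l
    have "lorentz_form (mat2 x z z y) \<in> W"
      using lorentz_form_sym2 sym2_W by blast
    then have "L_eigenvalue (\<phi> (lorentz_form (mat2 x z z y))) l \<longleftrightarrow>
        L_eigenvalue (lorentz_form (mat2 x z z y)) l"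
      using pres by (simp add: L_spectrum_def set_eq_iff)
    then show "pareto_eigenvalue (x *\<^sub>R K + y *\<^sub>R L + z *\<^sub>R M) l \<longleftrightarrow> pareto_eigenvalue (mat2 x z z y) l"
      unfolding decomp[symmetric] L_eigenvalue_iff_pareto_eigenvalue by simp
  qed
qed

lemma basis_images_of_quadrant_decomposition:
  assumes decomp:
    "\<And>x y z. quadrant_form (\<phi> (lorentz_form (mat2 x z z y))) = x *\<^sub>R K + y *\<^sub>R L + z *\<^sub>R M"
  shows "\<phi> (Eij 1 1) = lorentz_form ((1/2) *\<^sub>R (K + L - M))"
    and "\<phi> (Eij 2 2) = lorentz_form ((1/2) *\<^sub>R (K + L + M))"
    and "\<phi> (Eij 1 2 + Eij 2 1) = lorentz_form (K - L)"
proof -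
  have \<phi>_lorentz_form:
    "\<phi> (lorentz_form (mat2 x z z y)) = lorentz_form (x *\<^sub>R K + y *\<^sub>R L + z *\<^sub>R M)" for x y z
  proof -
    have "\<phi> (lorentz_form (mat2 x z z y)) =
        lorentz_form (quadrant_form (\<phi> (lorentz_form (mat2 x z z y))))"
      by simp
    then show ?thesis unfolding decomp .
  qed
  show "\<phi> (Eij 1 1) = lorentz_form ((1/2) *\<^sub>R (K + L - M))"
    using \<phi>_lorentz_form[where x="1/2" and y="1/2" and z="- 1/2"]
    by (simp add: lorentz_form_Eij algebra_simps)
  show "\<phi> (Eij 2 2) = lorentz_form ((1/2) *\<^sub>R (K + L + M))"
    using \<phi>_lorentz_form[where x="1/2" and y="1/2" and z="1/2"]
    by (simp add: lorentz_form_Eij algebra_simps)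
  show "\<phi> (Eij 1 2 + Eij 2 1) = lorentz_form (K - L)"
    using \<phi>_lorentz_form[where x=1 and y="- 1" and z=0]
    by (simp add: lorentz_form_Eij algebra_simps)
qed

lemma lorentz_form_diagonal_shape:
  fixes \<mu> :: real
  assumes "0 < \<mu>"
  defines "J \<equiv> mat2 0 \<mu> (inverse \<mu>) 0"
  shows "\<exists>a\<le>0. \<exists>s\<in>{-1, 1::real}.
    lorentz_form ((1/2) *\<^sub>R (mat 1 - J)) =
      mat2 (1 - a) (- s * sqrt (a\<^sup>2 - a)) (s * sqrt (a\<^sup>2 - a)) a \<and>
    lorentz_form ((1/2) *\<^sub>R (mat 1 + J)) =
      mat2 a (s * sqrt (a\<^sup>2 - a)) (- s * sqrt (a\<^sup>2 - a)) (1 - a)"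
proof -
  define \<nu> where "\<nu> = inverse \<mu>"
  have "0 < \<nu>" "\<mu> * \<nu> = 1" using assms by (simp_all add: \<nu>_def)
  define a where "a = 1/2 - (\<mu> + \<nu>)/4"
  define s :: real where "s = (if \<nu> \<le> \<mu> then 1 else -1)"
  have "a\<^sup>2 - a = ((\<mu> - \<nu>)/4)\<^sup>2 + (\<mu> * \<nu> - 1)/4"
    unfolding a_def by (simp add: power2_eq_square field_simps)
  then have s_sqrt: "s * sqrt (a\<^sup>2 - a) = (\<mu> - \<nu>)/4"
    using \<open>\<mu> * \<nu> = 1\<close> by (simp add: s_def)
  have "a \<le> 0"
  proof -
    have "0 \<le> (\<mu> - 1)\<^sup>2" by simp
    then have "2 * \<mu> \<le> \<mu> * \<mu> + 1" by (simp add: power2_eq_square algebra_simps)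
    then have "2 \<le> \<mu> + \<nu>" using assms by (simp add: \<nu>_def field_simps)
    then show ?thesis by (simp add: a_def)
  qed
  moreover have "lorentz_form ((1/2) *\<^sub>R (mat 1 - J)) =
      mat2 (1 - a) (- s * sqrt (a\<^sup>2 - a)) (s * sqrt (a\<^sup>2 - a)) a"
  proof -
    have half: "(1/2) *\<^sub>R (mat 1 - J) = mat2 (1/2) (- \<mu>/2) (- \<nu>/2) (1/2)"
      by (simp add: matrix2_eq_iff mat_def J_def \<nu>_def)
    show ?thesis
      unfolding half lorentz_form_mat2
      by (simp add: matrix2_eq_iff s_sqrt) (simp add: a_def field_simps)
  qed
  moreover have "lorentz_form ((1/2) *\<^sub>R (mat 1 + J)) =
      mat2 a (s * sqrt (a\<^sup>2 - a)) (- s * sqrt (a\<^sup>2 - a)) (1 - a)"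
  proof -
    have half: "(1/2) *\<^sub>R (mat 1 + J) = mat2 (1/2) (\<mu>/2) (\<nu>/2) (1/2)"
      by (simp add: matrix2_eq_iff mat_def J_def \<nu>_def)
    show ?thesis
      unfolding half lorentz_form_mat2
      by (simp add: matrix2_eq_iff s_sqrt) (simp add: a_def field_simps)
  qed
  moreover have "s \<in> {-1, 1}" by (simp add: s_def)
  ultimately show ?thesis by blast
qed

lemma lorentz_form_Eij_halves:
  "lorentz_form ((1/2) *\<^sub>R (mat 1 - mat2 0 1 1 0)) = Eij 1 1"
  "lorentz_form ((1/2) *\<^sub>R (mat 1 + mat2 0 1 1 0)) = Eij 2 2"
proof -
  have "(1/2) *\<^sub>R (mat 1 - mat2 0 1 1 0) = mat2 (1/2) (- 1/2) (- 1/2) (1/2)"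
    "(1/2) *\<^sub>R (mat 1 + mat2 0 1 1 0) = mat2 (1/2) (1/2) (1/2) (1/2)"
    by (simp_all add: matrix2_eq_iff mat_def)
  then show "lorentz_form ((1/2) *\<^sub>R (mat 1 - mat2 0 1 1 0)) = Eij 1 1"
    "lorentz_form ((1/2) *\<^sub>R (mat 1 + mat2 0 1 1 0)) = Eij 2 2"
    unfolding lorentz_form_Eij by simp_all
qed

lemma mat2_swap_sym2_eq_1:
  assumes "0 < \<mu>" "mat2 0 \<mu> (inverse \<mu>) 0 \<in> sym2"
  shows "\<mu> = 1"
proof -
  have "\<mu> * \<mu> = 1"
    using assms by (simp add: sym2_iff) (metis right_inverse order_less_irrefl)
  then have "(\<mu> - 1) * (\<mu> + 1) = 0"
    by (simp add: algebra_simps)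
  then show ?thesis
    using assms(1) by auto
qed

lemma lorentz_form_trace_free_shape:
  shows "\<exists>m r. lorentz_form (mat2 t b c (- t)) = mat2 m r (- r + 2 * t) (- m)"
    and "lorentz_form (mat2 t b c (- t)) \<in> sym2 \<Longrightarrow>
      \<exists>m. lorentz_form (mat2 t b c (- t)) = mat2 m t t (- m)"
proof -
  show "\<exists>m r. lorentz_form (mat2 t b c (- t)) = mat2 m r (- r + 2 * t) (- m)"
    by (intro exI[of _ "(- b - c)/2"] exI[of _ "(2 * t + b - c)/2"])
       (simp add: lorentz_form_mat2 matrix2_eq_iff field_simps)
  assume "lorentz_form (mat2 t b c (- t)) \<in> sym2"
  then have "b = c"
    by (simp add: lorentz_form_mat2 sym2_iff field_simps)
  then show "\<exists>m. lorentz_form (mat2 t b c (- t)) = mat2 m t t (- m)"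
    by (intro exI[of _ "- c"]) (simp add: lorentz_form_mat2 matrix2_eq_iff)
qed

theorem lemma4p3:
  fixes W :: "(real^2^2) set" and \<phi> :: "real^2^2 \<Rightarrow> real^2^2"
  assumes W: "W = UNIV \<or> W = sym2"
    and maps: "\<forall>A\<in>W. \<phi> A \<in> W"
    and lin: "\<forall>A\<in>W. \<forall>B\<in>W. \<forall>c d. \<phi> (c *\<^sub>R A + d *\<^sub>R B) = c *\<^sub>R \<phi> A + d *\<^sub>R \<phi> B"
    and pres: "\<forall>A\<in>W. L_spectrum (\<phi> A) = L_spectrum A"
  shows "(\<exists>a\<le>0. \<exists>s\<in>{-1, 1::real}.
            \<phi> (Eij 1 1) = mat2 (1 - a) (- s * sqrt (a\<^sup>2 - a)) (s * sqrt (a\<^sup>2 - a)) a \<and>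
            \<phi> (Eij 2 2) = mat2 a (s * sqrt (a\<^sup>2 - a)) (- s * sqrt (a\<^sup>2 - a)) (1 - a))
       \<and> (\<exists>m r. \<exists>t\<in>{-1, 1::real}. \<phi> (Eij 1 2 + Eij 2 1) = mat2 m r (- r + 2 * t) (- m))
       \<and> (W = sym2 \<longrightarrow>
            \<phi> (Eij 1 1) = Eij 1 1 \<and> \<phi> (Eij 2 2) = Eij 2 2 \<and>
            (\<exists>m. \<exists>r\<in>{-1, 1::real}. \<phi> (Eij 1 2 + Eij 2 1) = mat2 m r r (- m)))"
proof -
  have sym2_W: "sym2 \<subseteq> W" using W by auto
  define K L M where "K = quadrant_form (\<phi> (lorentz_form (mat2 1 0 0 0)))"
    and "L = quadrant_form (\<phi> (lorentz_form (mat2 0 0 0 1)))"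
    and "M = quadrant_form (\<phi> (lorentz_form (mat2 0 1 1 0)))"
  note conjugate =
    L_spectrum_preserver_quadrant_conjugate[OF sym2_W lin pres, folded K_def L_def M_def]
  interpret pareto_spectrum_preserver_sym2 K L M by (rule conjugate(2))
  note images = basis_images_of_quadrant_decomposition[OF conjugate(1), unfolded sym2_images(1)]
  obtain \<mu> where \<mu>: "0 < \<mu>" "M = mat2 0 \<mu> (inverse \<mu>) 0"
    using sym2_images(2) by blast
  obtain t b c where t: "t \<in> {-1, 1}" and K_minus_L: "K - L = mat2 t b c (- t)"
    using sym2_images(3) by (metis matrix2_eq_iff mat2_nth)
  show ?thesis
  proof (intro conjI impI)
    show "\<exists>a\<le>0. \<exists>s\<in>{-1, 1::real}.
        \<phi> (Eij 1 1) = mat2 (1 - a) (- s * sqrt (a\<^sup>2 - a)) (s * sqrt (a\<^sup>2 - a)) a \<and>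
        \<phi> (Eij 2 2) = mat2 a (s * sqrt (a\<^sup>2 - a)) (- s * sqrt (a\<^sup>2 - a)) (1 - a)"
      using lorentz_form_diagonal_shape[OF \<mu>(1)] unfolding images \<mu>(2) .
    show "\<exists>m r. \<exists>t\<in>{-1, 1::real}. \<phi> (Eij 1 2 + Eij 2 1) = mat2 m r (- r + 2 * t) (- m)"
      using lorentz_form_trace_free_shape(1) t unfolding images K_minus_L by blast
    assume "W = sym2"
    then have "M \<in> sym2" and "\<phi> (Eij 1 2 + Eij 2 1) \<in> sym2"
      using maps lorentz_form_sym2 quadrant_form_sym2 by (auto simp: M_def sym2_iff Eij_def)
    then have "\<mu> = 1" and "\<exists>m. \<phi> (Eij 1 2 + Eij 2 1) = mat2 m t t (- m)"
      using mat2_swap_sym2_eq_1[OF \<mu>(1)] \<mu>(2) lorentz_form_trace_free_shape(2)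
      unfolding images K_minus_L by auto
    moreover from \<open>\<mu> = 1\<close> have M_swap: "M = mat2 0 1 1 0"
      using \<mu>(2) by simp
    ultimately show "\<phi> (Eij 1 1) = Eij 1 1" "\<phi> (Eij 2 2) = Eij 2 2"
        "\<exists>m. \<exists>r\<in>{-1, 1::real}. \<phi> (Eij 1 2 + Eij 2 1) = mat2 m r r (- m)"
      using t unfolding images M_swap lorentz_form_Eij_halves by auto
  qed
qed

end
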